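(* Let $\nabla$ be a metric connection on an anchored metric bundle $(E,\langle\cdot,\cdot\rangle,a_E)$ over $M$, with associated bracket $\circ=\circ^\nabla$. Then for all $e_1,e_2,e_3\in\Gamma(E)$, $$C^\nabla(e_1,e_2)e_3+C^\nabla(e_2,e_3)e_1+C^\nabla(e_3,e_1)e_2+\nabla_{\Delta_{e_3}e_2}e_1+\nabla_{\Delta_{e_1}e_3}e_2+\nabla_{\Delta_{e_2}e_1}e_3+Q(e_1,e_2,e_3)+\big(\mathcal{D}\langle e_1,e_3\rangle\big)\circ e_2$$ $$=e_1\circ(e_2\circ e_3)-(e_1\circ e_2)\circ e_3-e_2\circ(e_1\circ e_3).$$
   Context: Anchored metric bundle: vector bundle $E\to M$, pseudo-metric $\langle\cdot,\cdot\rangle$ (nondegenerate symmetric), bundle map $a_E:E\to TM$. Metric connection: $\mathbb{R}$-bilinear $\nabla$ with $\nabla_{fe_1}e_2=f\nabla_{e_1}e_2$, $\nabla_{e_1}(fe_2)=a_E(e_1)(f)e_2+f\nabla_{e_1}e_2$, $a_E(e_1)\langle e_2,e_3\rangle=\langle\nabla_{e_1}e_2,e_3\rangle+\langle e_2,\nabla_{e_1}e_3\rangle$. $\Delta$: $\langle\Delta_{e_2}e_1,e_3\rangle=\langle\nabla_{e_3}e_1,e_2\rangle$; $e_1\circ^\nabla e_2=\nabla_{e_1}e_2-\nabla_{e_2}e_1+\Delta_{e_2}e_1$. $\mathcal{D}$: $\langle\mathcal{D}(f),e\rangle=a_E(e)(f)$. $C^\nabla(e_1,e_2)=\nabla_{e_1}\nabla_{e_2}-\nabla_{e_2}\nabla_{e_1}-\nabla_{e_1\circ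 e_2}$. $Q$: $\langle Q(e_1,e_2,e_3),t\rangle=\langle C^\nabla(e_1,t)e_2,e_3\rangle+\langle C^\nabla(e_2,t)e_3,e_1\rangle+\langle C^\nabla(e_3,t)e_1,e_2\rangle$ for all $t\in\Gamma(E)$. *)

theory Defs
  imports Main
begin

text \<open>The ring of smooth
functions C-infinity(M) is modelled by a commutative ring 'f, the space of
sections Gamma(E) by an abelian group 's which is an 'f-module via smul.
The pseudo-metric is the induced pairing on sections, the anchor a_E acts on
sections as derivations of the function ring.\<close>

definition anchored_metric_bundle ::
  "('f::comm_ring_1 \<Rightarrow> 's::ab_group_add \<Rightarrow> 's) \<Rightarrow> ('s \<Rightarrow> 's \<Rightarrow> 'f) \<Rightarrow> ('s \<Rightarrow> 'f \<Rightarrow> 'f) \<Rightarrow> bool"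
where
  "anchored_metric_bundle smul pair anc \<longleftrightarrow>
     (\<forall>a b x. smul a (x + b) = smul a x + smul a b) \<and>
     (\<forall>a b x. smul (a + b) x = smul a x + smul b x) \<and>
     (\<forall>a b x. smul a (smul b x) = smul (a * b) x) \<and>
     (\<forall>x. smul 1 x = x) \<and>
     (\<forall>e1 e2. pair e1 e2 = pair e2 e1) \<and>
     (\<forall>e1 e2 e3. pair (e1 + e2) e3 = pair e1 e3 + pair e2 e3) \<and>
     (\<forall>f e1 e2. pair (smul f e1) e2 = f * pair e1 e2) \<and>
     (\<forall>e. (\<forall>t. pair e t = 0) \<longrightarrow> e = 0) \<and>
     (\<forall>e1 e2 g. anc (e1 + e2) g = anc e1 g + anc e2 g) \<and>
     (\<forall>f e g. anc (smul f e) g = f * anc e g) \<and>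
     (\<forall>e g h. anc e (g + h) = anc e g + anc e h) \<and>
     (\<forall>e g h. anc e (g * h) = anc e g * h + g * anc e h)"

definition metric_connection ::
  "('f::comm_ring_1 \<Rightarrow> 's::ab_group_add \<Rightarrow> 's) \<Rightarrow> ('s \<Rightarrow> 's \<Rightarrow> 'f) \<Rightarrow> ('s \<Rightarrow> 'f \<Rightarrow> 'f)
     \<Rightarrow> ('s \<Rightarrow> 's \<Rightarrow> 's) \<Rightarrow> bool"
where
  "metric_connection smul pair anc nabla \<longleftrightarrow>
     (\<forall>e1 e2 e3. nabla (e1 + e2) e3 = nabla e1 e3 + nabla e2 e3) \<and>
     (\<forall>e1 e2 e3. nabla e1 (e2 + e3) = nabla e1 e2 + nabla e1 e3) \<and>
     (\<forall>f e1 e2. nabla (smul f e1) e2 = smul f (nabla e1 e2)) \<and>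
     (\<forall>f e1 e2. nabla e1 (smul f e2) = smul (anc e1 f) e2 + smul f (nabla e1 e2)) \<and>
     (\<forall>e1 e2 e3. anc e1 (pair e2 e3) = pair (nabla e1 e2) e3 + pair e2 (nabla e1 e3))"

text \<open>Delta_e2 e1 is written Delta e2 e1; it is characterised by
  pair (Delta e2 e1) e3 = pair (nabla e3 e1) e2.\<close>
definition is_Delta ::
  "('s \<Rightarrow> 's \<Rightarrow> 'f) \<Rightarrow> ('s \<Rightarrow> 's \<Rightarrow> 's) \<Rightarrow> ('s \<Rightarrow> 's \<Rightarrow> 's) \<Rightarrow> bool"
where
  "is_Delta pair nabla Delta \<longleftrightarrow>
     (\<forall>e1 e2 e3. pair (Delta e2 e1) e3 = pair (nabla e3 e1) e2)"

definition is_Dop :: "('s \<Rightarrow> 's \<Rightarrow> 'f) \<Rightarrow> ('s \<Rightarrow> 'f \<Rightarrow> 'f) \<Rightarrow> ('f \<Rightarrow> 's) \<Rightarrow> bool"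
where
  "is_Dop pair anc Dop \<longleftrightarrow> (\<forall>f e. pair (Dop f) e = anc e f)"

definition bracket ::
  "('s::ab_group_add \<Rightarrow> 's \<Rightarrow> 's) \<Rightarrow> ('s \<Rightarrow> 's \<Rightarrow> 's) \<Rightarrow> 's \<Rightarrow> 's \<Rightarrow> 's"
where
  "bracket nabla Delta e1 e2 = nabla e1 e2 - nabla e2 e1 + Delta e2 e1"

definition curv ::
  "('s::ab_group_add \<Rightarrow> 's \<Rightarrow> 's) \<Rightarrow> ('s \<Rightarrow> 's \<Rightarrow> 's) \<Rightarrow> 's \<Rightarrow> 's \<Rightarrow> 's \<Rightarrow> 's"
where
  "curv nabla Delta e1 e2 e =
     nabla e1 (nabla e2 e) - nabla e2 (nabla e1 e) - nabla (bracket nabla Delta e1 e2) e"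

definition is_Qop ::
  "('s::ab_group_add \<Rightarrow> 's \<Rightarrow> 'f::comm_ring_1) \<Rightarrow> ('s \<Rightarrow> 's \<Rightarrow> 's) \<Rightarrow> ('s \<Rightarrow> 's \<Rightarrow> 's)
     \<Rightarrow> ('s \<Rightarrow> 's \<Rightarrow> 's \<Rightarrow> 's) \<Rightarrow> bool"
where
  "is_Qop pair nabla Delta Q \<longleftrightarrow>
     (\<forall>e1 e2 e3 t. pair (Q e1 e2 e3) t =
        pair (curv nabla Delta e1 t e2) e3 + pair (curv nabla Delta e2 t e3) e1
        + pair (curv nabla Delta e3 t e1) e2)"

end

theory Submission
  imports Defs "HOL.Modules"
begin

text \<open>Since the pairing is nondegenerate, it suffices to compare both sides after pairing
with an arbitrary section t.  Write C0 = skew_curv for the curvature of the skew bracket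
\<nabla>_a b - \<nabla>_b a, so that C(a,t) = C0(a,t) - \<nabla>_(\<Delta>_t a).  The defining relation of \<Delta> turns
\<langle>\<nabla>_(\<Delta>_t a) b, c\<rangle> into \<langle>\<nabla>_(\<Delta>_c b) a, t\<rangle>, so Q plus the three terms \<nabla>_(\<Delta> ...) pairs with t
to the cyclic sum of \<langle>C0(a,t) b, c\<rangle>.  On the other side, expanding the brackets shows that the
Jacobiator minus the cyclic curvature sum and D\<langle>e1,e3\<rangle> \<circ> e2 consists of terms in \<Delta> alone;
pairing them with t and applying metric compatibility gives the same cyclic sum.\<close>

definition skew_curv :: "('s::ab_group_add \<Rightarrow> 's \<Rightarrow> 's) \<Rightarrow> 's \<Rightarrow> 's \<Rightarrow> 's \<Rightarrow> 's"
where
  "skew_curv nabla a b e =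
     nabla a (nabla b e) - nabla b (nabla a e) - nabla (nabla a b - nabla b a) e"

locale additive_metric_connection =
  fixes pair :: "'s::ab_group_add \<Rightarrow> 's \<Rightarrow> 'f::comm_ring_1"
    and anc :: "'s \<Rightarrow> 'f \<Rightarrow> 'f"
    and nabla :: "'s \<Rightarrow> 's \<Rightarrow> 's"
    and Delta :: "'s \<Rightarrow> 's \<Rightarrow> 's"
  assumes pair_commute: "pair x y = pair y x"
    and pair_add_left: "pair (x + y) z = pair x z + pair y z"
    and pair_nondegenerate: "(\<And>t. pair e t = 0) \<Longrightarrow> e = 0"
    and nabla_add_left: "nabla (x + y) z = nabla x z + nabla y z"
    and nabla_add_right: "nabla x (y + z) = nabla x y + nabla x z"
    and nabla_metric: "anc a (pair x y) = pair (nabla a x) y + pair x (nabla a y)"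
    and pair_Delta: "pair (Delta b a) c = pair (nabla c a) b"
begin

abbreviation brk :: "'s \<Rightarrow> 's \<Rightarrow> 's" where "brk \<equiv> bracket nabla Delta"

abbreviation Curv :: "'s \<Rightarrow> 's \<Rightarrow> 's \<Rightarrow> 's" where "Curv \<equiv> curv nabla Delta"

lemma pair_add_right: "pair z (x + y) = pair z x + pair z y"
  by (simp only: pair_commute[of z] pair_add_left)

lemma pair_eqI: "(\<And>t. pair x t = pair y t) \<Longrightarrow> x = y"
  using pair_nondegenerate[of "x - y"] pair_add_left[of "x - y" y] by simp

lemma pair_Delta_right: "pair c (Delta b a) = pair (nabla c a) b"
  by (simp only: pair_commute[of c] pair_Delta)

lemma Delta_add_left: "Delta (x + y) a = Delta x a + Delta y a"
  by (rule pair_eqI) (simp only: pair_Delta pair_add_left pair_add_right)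

lemma Delta_add_right: "Delta b (x + y) = Delta b x + Delta b y"
  by (rule pair_eqI) (simp only: pair_Delta pair_add_left nabla_add_right)

lemma additive_pair_left: "additive (\<lambda>x. pair x z)"
  by unfold_locales (rule pair_add_left)

lemma additive_nabla_left: "additive (\<lambda>x. nabla x z)"
  by unfold_locales (rule nabla_add_left)

lemma additive_nabla_right: "additive (\<lambda>x. nabla z x)"
  by unfold_locales (rule nabla_add_right)

lemma additive_Delta_left: "additive (\<lambda>x. Delta x a)"
  by unfold_locales (rule Delta_add_left)

lemmas pair_diff_left = additive.diff[OF additive_pair_left]
lemmas nabla_diff_left = additive.diff[OF additive_nabla_left]
lemmas nabla_diff_right = additive.diff[OF additive_nabla_right]
lemmas Delta_diff_left = additive.diff[OF additive_Delta_left]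

lemma Dop_pair:
  assumes "is_Dop pair anc Dop"
  shows "Dop (pair a b) = Delta b a + Delta a b"
proof (rule pair_eqI)
  fix t
  have "pair (Dop (pair a b)) t = pair (nabla t a) b + pair a (nabla t b)"
    using assms nabla_metric unfolding is_Dop_def by simp
  then show "pair (Dop (pair a b)) t = pair (Delta b a + Delta a b) t"
    by (simp only: pair_add_left pair_Delta pair_commute[of a])
qed

lemma pair_nabla_along_Delta: "pair (nabla (Delta b a) c) d = pair (nabla (Delta d c) a) b"
  by (simp only: pair_Delta[symmetric] pair_commute[of "Delta b a"])

lemma pair_nabla_Delta:
  "pair (nabla a (Delta b c)) d
     = pair (nabla a (nabla d c)) b + pair (nabla d c) (nabla a b) - pair (nabla (nabla a d) c) b"
  using nabla_metric[of a "Delta b c" d] nabla_metric[of a "nabla d c" b]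
  by (simp add: pair_Delta algebra_simps)

lemma curv_eq_skew_curv: "Curv a b e = skew_curv nabla a b e - nabla (Delta b a) e"
  by (simp add: curv_def skew_curv_def bracket_def nabla_add_left nabla_diff_left)

lemma pair_curv:
  "pair (Curv a t b) c = pair (skew_curv nabla a t b) c - pair (nabla (Delta c b) a) t"
  by (simp only: curv_eq_skew_curv pair_diff_left pair_nabla_along_Delta)

lemma pair_jacobiator_remainder:
  assumes "is_Dop pair anc Dop"
  shows "pair (brk e1 (brk e2 e3) - brk (brk e1 e2) e3 - brk e2 (brk e1 e3)
                 - (Curv e1 e2 e3 + Curv e2 e3 e1 + Curv e3 e1 e2) - brk (Dop (pair e1 e3)) e2) t
         = pair (skew_curv nabla e1 t e2) e3 + pair (skew_curv nabla e2 t e3) e1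
           + pair (skew_curv nabla e3 t e1) e2"
proof -
  have remainder: "brk e1 (brk e2 e3) - brk (brk e1 e2) e3 - brk e2 (brk e1 e3)
          - (Curv e1 e2 e3 + Curv e2 e3 e1 + Curv e3 e1 e2) - brk (Dop (pair e1 e3)) e2
        = nabla e2 (Delta e1 e3) + nabla e1 (Delta e3 e2) + nabla e3 (Delta e2 e1)
          - Delta e2 (Delta e1 e3) - Delta e2 (Delta e3 e1)
          + Delta (brk e2 e3) e1 - Delta e3 (brk e1 e2) - Delta (brk e1 e3) e2"
    by (simp add: Dop_pair[OF assms] curv_def bracket_def nabla_add_left nabla_add_right
        nabla_diff_left nabla_diff_right Delta_add_right algebra_simps)
  show ?thesis
    unfolding remainder
    by (simp only: bracket_def skew_curv_def pair_add_left pair_diff_left nabla_add_right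
        nabla_diff_left nabla_diff_right Delta_add_left Delta_diff_left
        pair_Delta pair_Delta_right pair_nabla_Delta)
      (simp add: algebra_simps pair_commute)
qed

lemma pair_Qop:
  assumes "is_Qop pair nabla Delta Q"
  shows "pair (Q e1 e2 e3) t
         = pair (skew_curv nabla e1 t e2) e3 + pair (skew_curv nabla e2 t e3) e1
           + pair (skew_curv nabla e3 t e1) e2
           - pair (nabla (Delta e3 e2) e1 + nabla (Delta e1 e3) e2 + nabla (Delta e2 e1) e3) t"
  using assms unfolding is_Qop_def by (simp add: pair_curv pair_add_left)

end

lemma additive_metric_connectionI:
  assumes "anchored_metric_bundle smul pair anc"
    and "metric_connection smul pair anc nabla"
    and "is_Delta pair nabla Delta"
  shows "additive_metric_connection pair anc nabla Delta"
  using assms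
  unfolding anchored_metric_bundle_def metric_connection_def is_Delta_def
  by unfold_locales auto

theorem proposition3p10:
  fixes smul :: "'f::comm_ring_1 \<Rightarrow> 's::ab_group_add \<Rightarrow> 's"
    and pair :: "'s \<Rightarrow> 's \<Rightarrow> 'f"
    and anc :: "'s \<Rightarrow> 'f \<Rightarrow> 'f"
    and nabla :: "'s \<Rightarrow> 's \<Rightarrow> 's"
    and Delta :: "'s \<Rightarrow> 's \<Rightarrow> 's"
    and Dop :: "'f \<Rightarrow> 's"
    and Q :: "'s \<Rightarrow> 's \<Rightarrow> 's \<Rightarrow> 's"
  assumes "anchored_metric_bundle smul pair anc"
    and "metric_connection smul pair anc nabla"
    and "is_Delta pair nabla Delta"
    and "is_Dop pair anc Dop"
    and "is_Qop pair nabla Delta Q"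
  shows "curv nabla Delta e1 e2 e3 + curv nabla Delta e2 e3 e1 + curv nabla Delta e3 e1 e2
          + nabla (Delta e3 e2) e1 + nabla (Delta e1 e3) e2 + nabla (Delta e2 e1) e3
          + Q e1 e2 e3 + bracket nabla Delta (Dop (pair e1 e3)) e2
         = bracket nabla Delta e1 (bracket nabla Delta e2 e3)
           - bracket nabla Delta (bracket nabla Delta e1 e2) e3
           - bracket nabla Delta e2 (bracket nabla Delta e1 e3)"
proof -
  interpret additive_metric_connection pair anc nabla Delta
    using assms(1-3)
    by (rule additive_metric_connectionI)
  have "brk e1 (brk e2 e3) - brk (brk e1 e2) e3 - brk e2 (brk e1 e3)
          - (Curv e1 e2 e3 + Curv e2 e3 e1 + Curv e3 e1 e2) - brk (Dop (pair e1 e3)) e2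
        = nabla (Delta e3 e2) e1 + nabla (Delta e1 e3) e2 + nabla (Delta e2 e1) e3 + Q e1 e2 e3"
    by (rule pair_eqI)
      (simp add: pair_jacobiator_remainder[OF assms(4)] pair_Qop[OF assms(5)] pair_add_left)
  then show ?thesis
    by (simp add: algebra_simps)
qed

end
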